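(* Let $p_k\ge0$ ($k\ge1$) with $\sum_k p_k=1$ and $Q_1=\sum_k kp_k<\infty$, let $Q(z)=\sum_k p_kz^k$, and for $q\in(0,1)$ define $\kappa(q)>0$ by $$-\log\kappa(q)=\int_0^{1-q}\Big(\frac{Q_1}{1-Q(z)}-\frac{1}{1-z}\Big)\,dz.$$ Then $\kappa$ is slowly varying at $0$: for every $\lambda>0$, $\kappa(\lambda q)/\kappa(q)\to1$ as $q\to0$. *)

theory Defs
  imports "HOL-Analysis.Analysis"
begin

text \<open>The offspring law is given by p :: nat => real, where only the values p k for k >= 1
  are used (the value p 0 is ignored).\<close>

definition genfun :: "(nat \<Rightarrow> real) \<Rightarrow> real \<Rightarrow> real" where
  "genfun p z = (\<Sum>k. p (Suc k) * z ^ Suc k)"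

definition mean1 :: "(nat \<Rightarrow> real) \<Rightarrow> real" where
  "mean1 p = (\<Sum>k. real (Suc k) * p (Suc k))"

definition kappa :: "(nat \<Rightarrow> real) \<Rightarrow> real \<Rightarrow> real" where
  "kappa p q = exp (- integral {0..1 - q}
      (\<lambda>z. mean1 p / (1 - genfun p z) - 1 / (1 - z)))"

end

theory Submission
  imports Defs
begin

text \<open>Writing \<open>1 - Q(z) = (1 - z) g(z)\<close> with \<open>g(z) = \<Sum>\<^sub>k p\<^sub>k (1 + z + \<dots> + z\<^sup>k\<^sup>-\<^sup>1)\<close>,
  the function \<open>g\<close> is continuous on \<open>[0,1]\<close>, at least \<open>1\<close>, and \<open>g(1) = Q\<^sub>1\<close>.
  Hence the integrand equals \<open>H(z)/(1 - z)\<close> with \<open>H = Q\<^sub>1/g - 1\<close> continuous and \<open>H(1) = 0\<close>.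
  The quotient \<open>\<kappa>(\<lambda>q)/\<kappa>(q)\<close> is the exponential of the integral over the interval between
  \<open>1 - \<lambda>q\<close> and \<open>1 - q\<close>; there \<open>1/(1 - z)\<close> is at most \<open>1/(min \<lambda> 1 \<cdot> q)\<close> on an interval
  of length \<open>\<bar>\<lambda> - 1\<bar> q\<close>, so the integral is bounded by a constant times \<open>sup \<bar>H\<bar>\<close> near \<open>1\<close>,
  which tends to \<open>0\<close>.\<close>

lemma integral_div_one_minus_increment_bound:
  fixes F H :: "real \<Rightarrow> real"
  assumes H_cont: "continuous_on {0..1} H"
    and F_eq: "\<And>z. z \<in> {0..<1} \<Longrightarrow> F z = H z / (1 - z)"
    and ab: "0 \<le> a" "a \<le> b" "b < 1"
    and H_small: "\<And>z. z \<in> {a..b} \<Longrightarrow> \<bar>H z\<bar> \<le> e"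
  shows "\<bar>integral {0..b} F - integral {0..a} F\<bar> \<le> e / (1 - b) * (b - a)"
proof -
  have "continuous_on {0..b} (\<lambda>z. H z / (1 - z))"
    using ab by (auto intro!: continuous_intros continuous_on_subset[OF H_cont])
  moreover have F_on: "\<And>z. z \<in> {0..b} \<Longrightarrow> H z / (1 - z) = F z"
    using F_eq ab by auto
  ultimately have "continuous_on {0..b} F"
    by (rule continuous_on_eq)
  then have "integral {0..b} F - integral {0..a} F = integral {a..b} F"
    using ab by (simp add: Henstock_Kurzweil_Integration.integral_combine[symmetric]
        integrable_continuous_interval)
  also have "\<dots> = integral {a..b} (\<lambda>z. H z / (1 - z))"
    using F_on ab by (intro integral_cong) auto
  also have "norm \<dots> \<le> e / (1 - b) * Henstock_Kurzweil_Integration.content {a..b}"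
  proof (rule has_integral_bound_real[where S = "{}"])
    show "0 \<le> e / (1 - b)"
      using ab H_small[of a] by simp
    have "continuous_on {a..b} (\<lambda>z. H z / (1 - z))"
      using ab by (auto intro!: continuous_intros continuous_on_subset[OF H_cont])
    then show "((\<lambda>z. H z / (1 - z)) has_integral integral {a..b} (\<lambda>z. H z / (1 - z))) {a..b}"
      by (simp add: integrable_continuous_interval integrable_integral)
    fix z assume "z \<in> {a..b} - {}"
    then show "norm (H z / (1 - z)) \<le> e / (1 - b)"
      using ab H_small[of z] by (auto simp: abs_div intro!: frac_le)
  qed auto
  finally show ?thesis
    using ab by simp
qed

lemma integral_div_one_minus_increment_tendsto_0:
  fixes F H :: "real \<Rightarrow> real"
  assumes H_cont: "continuous_on {0..1} H" and H1: "H 1 = 0"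
    and F_eq: "\<And>z. z \<in> {0..<1} \<Longrightarrow> F z = H z / (1 - z)"
    and c: "c > 0"
  shows "((\<lambda>q. integral {0..1 - q} F - integral {0..1 - c * q} F) \<longlongrightarrow> 0) (at_right 0)"
proof (rule tendstoI)
  fix \<epsilon> :: real assume \<epsilon>: "\<epsilon> > 0"
  define cm where "cm = min c 1"
  define cM where "cM = max c 1"
  define K where "K = (cM - cm) / cm"
  have cm: "0 < cm" "cm \<le> cM" "1 \<le> cM"
    using c by (auto simp: cm_def cM_def)
  have "K \<ge> 0"
    using cm by (simp add: K_def)
  define e where "e = \<epsilon> / (K + 1)"
  have e: "e > 0" "e * K < \<epsilon>"
    using \<epsilon> \<open>K \<ge> 0\<close> by (auto simp: e_def field_simps)
  obtain d where d: "d > 0" "\<And>z. z \<in> {0..1} \<Longrightarrow> dist z 1 < d \<Longrightarrow> \<bar>H z\<bar> < e"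
    using H_cont e(1) H1 unfolding continuous_on_iff
    by (metis atLeastAtMost_iff dist_real_def diff_zero order_refl zero_le_one)
  have "\<forall>\<^sub>F q in at_right 0. q \<in> {0<..<min d 1 / cM}"
    by (rule eventually_at_right_real) (use d cm in auto)
  then show "\<forall>\<^sub>F q in at_right 0. dist (integral {0..1 - q} F - integral {0..1 - c * q} F) 0 < \<epsilon>"
  proof (rule eventually_mono)
    fix q assume q: "q \<in> {0<..<min d 1 / cM}"
    define a where "a = 1 - cM * q"
    define b where "b = 1 - cm * q"
    have q_small: "cM * q < min d 1"
      using q cm by (simp add: field_simps)
    have ab: "0 \<le> a" "a \<le> b" "b < 1"
      using q q_small cm by (auto simp: a_def b_def algebra_simps)
    have "\<bar>integral {0..b} F - integral {0..a} F\<bar> \<le> e / (1 - b) * (b - a)"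
    proof (rule integral_div_one_minus_increment_bound[OF H_cont F_eq ab])
      fix z assume "z \<in> {a..b}"
      then have "z \<in> {0..1}" "dist z 1 < d"
        using ab q_small by (auto simp: a_def dist_real_def)
      then show "\<bar>H z\<bar> \<le> e"
        using d(2) by fastforce
    qed
    also have "\<dots> = e * K"
      using q cm by (simp add: a_def b_def K_def field_simps)
    also have "\<bar>integral {0..b} F - integral {0..a} F\<bar>
        = \<bar>integral {0..1 - q} F - integral {0..1 - c * q} F\<bar>"
      using c by (cases "c \<le> 1") (auto simp: a_def b_def cm_def cM_def)
    finally show "dist (integral {0..1 - q} F - integral {0..1 - c * q} F) 0 < \<epsilon>"
      using e(2) by (simp add: dist_real_def)
  qed
qed

definition genfun_slope :: "(nat \<Rightarrow> real) \<Rightarrow> real \<Rightarrow> real" where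
  "genfun_slope p z = (\<Sum>k. p (Suc k) * (\<Sum>j<Suc k. z ^ j))"

lemma geometric_partial_sum_bounds:
  fixes z :: real
  assumes "z \<in> {0..1}"
  shows "1 \<le> (\<Sum>j<Suc k. z ^ j)" "(\<Sum>j<Suc k. z ^ j) \<le> real (Suc k)"
proof -
  have "(\<Sum>j<Suc k. z ^ j) = 1 + (\<Sum>j<k. z ^ Suc j)"
    by (simp only: sum.lessThan_Suc_shift power_0)
  moreover have "0 \<le> (\<Sum>j<k. z ^ Suc j)"
    using assms by (intro sum_nonneg) auto
  ultimately show "1 \<le> (\<Sum>j<Suc k. z ^ j)"
    by simp
  have "(\<Sum>j<Suc k. z ^ j) \<le> (\<Sum>j<Suc k. 1)"
    using assms by (intro sum_mono) (auto intro: power_le_one)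
  then show "(\<Sum>j<Suc k. z ^ j) \<le> real (Suc k)"
    by simp
qed

lemma genfun_slope_term_bound:
  assumes "\<And>k. 0 \<le> p (Suc k)" "z \<in> {0..1}"
  shows "norm (p (Suc k) * (\<Sum>j<Suc k. z ^ j)) \<le> real (Suc k) * p (Suc k)"
  using geometric_partial_sum_bounds[OF assms(2), of k] assms(1)[of k]
  by (simp add: abs_mult mult.commute mult_left_mono)

lemma summable_genfun_slope:
  assumes "\<And>k. 0 \<le> p (Suc k)" "summable (\<lambda>k. real (Suc k) * p (Suc k))" "z \<in> {0..1}"
  shows "summable (\<lambda>k. p (Suc k) * (\<Sum>j<Suc k. z ^ j))"
  using genfun_slope_term_bound[where p = p, OF assms(1,3)]
  by (intro summable_comparison_test[OF _ assms(2)]) blast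

lemma continuous_on_genfun_slope:
  assumes "\<And>k. 0 \<le> p (Suc k)" "summable (\<lambda>k. real (Suc k) * p (Suc k))"
  shows "continuous_on {0..1} (genfun_slope p)"
proof (rule uniform_limit_theorem)
  show "uniform_limit {0..1} (\<lambda>n z. \<Sum>k<n. p (Suc k) * (\<Sum>j<Suc k. z ^ j))
      (genfun_slope p) sequentially"
    unfolding genfun_slope_def
    by (rule Weierstrass_m_test[OF genfun_slope_term_bound[where p = p, OF assms(1)] assms(2)]) assumption
qed (auto simp del: sum.lessThan_Suc intro!: continuous_intros always_eventually)

lemma genfun_slope_one: "genfun_slope p 1 = mean1 p"
  by (simp add: genfun_slope_def mean1_def mult.commute)

lemma genfun_slope_ge_one:
  assumes "\<And>k. 0 \<le> p (Suc k)" "(\<lambda>k. p (Suc k)) sums 1"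
    "summable (\<lambda>k. real (Suc k) * p (Suc k))" "z \<in> {0..1}"
  shows "genfun_slope p z \<ge> 1"
proof -
  have "1 = (\<Sum>k. p (Suc k))"
    using assms(2) by (simp add: sums_iff)
  also have "\<dots> \<le> genfun_slope p z"
    unfolding genfun_slope_def
  proof (rule suminf_le[OF _ _ summable_genfun_slope[OF assms(1,3,4)]])
    show "summable (\<lambda>k. p (Suc k))"
      using assms(2) by (simp add: sums_iff)
    show "p (Suc k) \<le> p (Suc k) * (\<Sum>j<Suc k. z ^ j)" for k
      using geometric_partial_sum_bounds(1)[OF assms(4), of k] assms(1)[of k]
      by (metis mult_left_mono mult.right_neutral)
  qed
  finally show ?thesis .
qed

lemma one_minus_genfun_eq:
  assumes "\<And>k. 0 \<le> p (Suc k)" "(\<lambda>k. p (Suc k)) sums 1"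
    "summable (\<lambda>k. real (Suc k) * p (Suc k))" "z \<in> {0..1}"
  shows "1 - genfun p z = (1 - z) * genfun_slope p z"
proof -
  have "summable (\<lambda>k. p (Suc k) * z ^ Suc k)"
  proof (rule summable_comparison_test[of _ "\<lambda>k. p (Suc k)"])
    show "summable (\<lambda>k. p (Suc k))"
      using assms(2) by (simp add: sums_iff)
    have "norm (p (Suc k) * z ^ Suc k) \<le> p (Suc k)" for k
      using assms(1)[of k] assms(4) power_le_one[of z "Suc k"]
      by (simp add: abs_mult mult_left_le del: power_Suc)
    then show "\<exists>N. \<forall>k\<ge>N. norm (p (Suc k) * z ^ Suc k) \<le> p (Suc k)"
      by blast
  qed
  then have "(\<lambda>k. p (Suc k) - p (Suc k) * z ^ Suc k) sums (1 - genfun p z)"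
    unfolding genfun_def by (intro sums_diff[OF assms(2)] summable_sums)
  moreover have "(\<lambda>k. (1 - z) * (p (Suc k) * (\<Sum>j<Suc k. z ^ j))) sums ((1 - z) * genfun_slope p z)"
    unfolding genfun_slope_def
    by (intro sums_mult summable_sums summable_genfun_slope[OF assms(1,3,4)])
  moreover have "(1 - z) * (p (Suc k) * (\<Sum>j<Suc k. z ^ j)) = p (Suc k) - p (Suc k) * z ^ Suc k" for k
  proof -
    have "(1 - z) * (p (Suc k) * (\<Sum>j<Suc k. z ^ j)) = p (Suc k) * ((1 - z) * (\<Sum>j<Suc k. z ^ j))"
      by (simp only: mult.left_commute)
    also have "\<dots> = p (Suc k) * (1 - z ^ Suc k)"
      by (simp only: one_diff_power_eq)
    also have "\<dots> = p (Suc k) - p (Suc k) * z ^ Suc k"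
      by (simp only: right_diff_distrib mult_1_right)
    finally show ?thesis .
  qed
  ultimately show ?thesis
    using sums_unique2 by force
qed

theorem lemma3p8:
  fixes p :: "nat \<Rightarrow> real"
  assumes nonneg: "\<And>k. k \<ge> 1 \<Longrightarrow> p k \<ge> 0"
    and prob: "(\<lambda>k. p (Suc k)) sums 1"
    and mean_fin: "summable (\<lambda>k. real (Suc k) * p (Suc k))"
  shows "\<forall>c>0. ((\<lambda>q. kappa p (c * q) / kappa p q) \<longlongrightarrow> 1) (at_right 0)"
proof (intro allI impI)
  fix c :: real assume "c > 0"
  have p_nonneg: "\<And>k. 0 \<le> p (Suc k)"
    using nonneg by simp
  note slope_ge_one = genfun_slope_ge_one[OF p_nonneg prob mean_fin]
  define F where "F = (\<lambda>z. mean1 p / (1 - genfun p z) - 1 / (1 - z))"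
  define H where "H z = mean1 p / genfun_slope p z - 1" for z
  have "continuous_on {0..1} H"
    using slope_ge_one unfolding H_def
    by (force intro!: continuous_intros continuous_on_genfun_slope[OF p_nonneg mean_fin])
  moreover have "H 1 = 0"
    using slope_ge_one[of 1] by (simp add: H_def genfun_slope_one)
  moreover have "F z = H z / (1 - z)" if "z \<in> {0..<1}" for z
  proof -
    have "genfun_slope p z \<noteq> 0" "1 - z \<noteq> 0"
      using that slope_ge_one[of z] by auto
    then show ?thesis
      using that one_minus_genfun_eq[OF p_nonneg prob mean_fin, of z]
      by (simp add: F_def H_def diff_divide_distrib)
  qed
  ultimately have "((\<lambda>q. exp (integral {0..1 - q} F - integral {0..1 - c * q} F)) \<longlongrightarrow> exp 0)
      (at_right 0)"
    by (intro tendsto_exp integral_div_one_minus_increment_tendsto_0 \<open>c > 0\<close>)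
  then show "((\<lambda>q. kappa p (c * q) / kappa p q) \<longlongrightarrow> 1) (at_right 0)"
    by (simp add: kappa_def F_def exp_diff[symmetric])
qed

end
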